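(* Let $n\ge1$, $q$ a prime power, and let $\mathcal{F}$ be a covering of $[n]$ with no redundant basic set. The $\mathcal{F}$-combinatorial metric $d_{\mathcal{F}}$ on $\mathbb{F}_q^n$ admits a MacWilliams-type identity if and only if $\mathcal{F}$ is a $k$-partition of $[n]$ for some $k$.
   Context: For a covering $\mathcal{F}$ of $[n]$ (a family of subsets, called basic sets, whose union is $[n]$) and $x\in\mathbb{F}_q^n$ with $\mathrm{supp}(x)=\{i:x_i\neq0\}$, $\mathrm{wt}_{\mathcal{F}}(x)=\min\{|\mathcal{A}|:\mathcal{A}\subset\mathcal{F},\ \mathrm{supp}(x)\subset\bigcup_{A\in\mathcal{A}}A\}$ and $d_{\mathcal{F}}(x,y)=\mathrm{wt}_{\mathcal{F}}(x-y)$. A basic set $A$ is redundant if $A\subsetneq B$ for some $B\in\mathcal{F}$. $\mathcal{F}$ is a $k$-partition if it is a partition of $[n]$ all of whose blocks have cardinality $k$. For a linear code $\mathcal{C}\subset\mathbb{F}_q^n$, $\mathcal{C}^\perp=\{u: \sum_i u_ic_i=0\ \forall c\in\mathcal{C}\}$ and $W_{\mathcal{C}}(x,y)=\sum_{c\in\mathcal{C}}x^{D-\mathrm{wt}_{\mathcal{F}}(c)}y^{\mathrm{wt}_{\mathcal{F}}(c)}$ with $D=\max_{c\in\mathcal{C}}\mathrm{wt}_{\mathcal{F}}(c)$. The metric $d_{\mathcal{F}}$ admits a MacWilliams-type identity if for all linear codes $\mathcal{C}_1,\mathcal{C}_2\subset\mathbb{F}_q^n$, $W_{\mathcal{C}_1}=W_{\mathcal{C}_2}$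 implies $W_{\mathcal{C}_1^\perp}=W_{\mathcal{C}_2^\perp}$. *)

theory Defs
  imports Main "HOL-Library.Disjoint_Sets"
begin

text \<open>Vectors of F_q^n are modelled as functions nat => 'a vanishing outside [n] = {0..<n}.\<close>

definition vecs :: "nat \<Rightarrow> (nat \<Rightarrow> 'a::zero) set" where
  "vecs n = {x. \<forall>i\<ge>n. x i = 0}"

definition supp :: "(nat \<Rightarrow> 'a::zero) \<Rightarrow> nat set" where
  "supp x = {i. x i \<noteq> 0}"

definition is_covering :: "nat \<Rightarrow> nat set set \<Rightarrow> bool" where
  "is_covering n F \<longleftrightarrow> (\<forall>A\<in>F. A \<subseteq> {..<n}) \<and> \<Union>F = {..<n}"

definition redundant :: "nat set set \<Rightarrow> nat set \<Rightarrow> bool" where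
  "redundant F A \<longleftrightarrow> (\<exists>B\<in>F. A \<subset> B)"

definition wtF :: "nat set set \<Rightarrow> (nat \<Rightarrow> 'a::zero) \<Rightarrow> nat" where
  "wtF F x = Min {card \<A> | \<A>. \<A> \<subseteq> F \<and> supp x \<subseteq> \<Union>\<A>}"

definition dF :: "nat set set \<Rightarrow> (nat \<Rightarrow> 'a::ab_group_add) \<Rightarrow> (nat \<Rightarrow> 'a) \<Rightarrow> nat" where
  "dF F x y = wtF F (\<lambda>i. x i - y i)"

definition linear_code :: "nat \<Rightarrow> (nat \<Rightarrow> 'a::field) set \<Rightarrow> bool" where
  "linear_code n C \<longleftrightarrow> C \<subseteq> vecs n \<and> (\<lambda>_. 0) \<in> C \<and>
     (\<forall>x\<in>C. \<forall>y\<in>C. (\<lambda>i. x i + y i) \<in> C) \<and> (\<forall>a. \<forall>x\<in>C. (\<lambda>i. a * x i) \<in> C)"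

definition dual_code :: "nat \<Rightarrow> (nat \<Rightarrow> 'a::field) set \<Rightarrow> (nat \<Rightarrow> 'a) set" where
  "dual_code n C = {u \<in> vecs n. \<forall>c\<in>C. (\<Sum>i<n. u i * c i) = 0}"

text \<open>Weight enumerator W_C(x,y), a homogeneous bivariate integer polynomial, represented by its
  polynomial function on int x int (equality of such functions is equality of polynomials).\<close>
definition weight_enum :: "nat set set \<Rightarrow> (nat \<Rightarrow> 'a::zero) set \<Rightarrow> int \<Rightarrow> int \<Rightarrow> int" where
  "weight_enum F C = (\<lambda>x y. let D = Max (wtF F ` C) in
      \<Sum>c\<in>C. x ^ (D - wtF F c) * y ^ (wtF F c))"

definition admits_MacWilliams :: "'a::{finite,field} itself \<Rightarrow> nat \<Rightarrow> nat set set \<Rightarrow> bool" where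
  "admits_MacWilliams (T :: 'a itself) n F \<longleftrightarrow>
     (\<forall>(C1 :: (nat \<Rightarrow> 'a) set) (C2 :: (nat \<Rightarrow> 'a) set). linear_code n C1 \<longrightarrow> linear_code n C2 \<longrightarrow>
        weight_enum F C1 = weight_enum F C2 \<longrightarrow>
        weight_enum F (dual_code n C1) = weight_enum F (dual_code n C2))"

definition k_partition :: "nat \<Rightarrow> nat set set \<Rightarrow> nat \<Rightarrow> bool" where
  "k_partition n F k \<longleftrightarrow> partition_on {..<n} F \<and> (\<forall>A\<in>F. card A = k)"

end

theory Submission
  imports Defs "HOL-Library.FuncSet" "HOL-Library.Indicator_Function"
    "HOL-Computational_Algebra.Polynomial"
begin

(* For a k-partition, the weight of a vector is the number of blocks its support meets, so
   the number of pairs (c, R) with R a set of j blocks avoided by c is the sum over c of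
   binomial (|F| - wt c) j.  For the dual code, each summand is given by the classical identity
   |dual C \<inter> V_T| * |C| = q^|T| * |C \<inter> V_([n]-T)| for coordinate subspaces V_T, so these counts
   for dual C are determined by those for C, and a triangular binomial inversion recovers the
   weight distribution of dual C.
   Conversely, if basic sets A and B overlap, take a in A - B and b in A \<inter> B: the lines spanned
   by e_a and e_a + e_b lie in A and have equal enumerators, but their duals have different
   numbers of vectors of weight at most 1, because B is not redundant.  If F is a partition with
   |A| < |B|, the coordinate spaces of A and of an |A|-subset of B have equal enumerators, but
   only the dual of the second contains a vector of full weight |F|. *)

section \<open>Coordinate subspaces\<close>

definition coord_space :: "nat \<Rightarrow> nat set \<Rightarrow> (nat \<Rightarrow> 'a::zero) set" where
  "coord_space n T = {x \<in> vecs n. supp x \<subseteq> T}"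

lemma supp_subset_lessThan: "x \<in> vecs n \<Longrightarrow> supp x \<subseteq> {..<n}"
  unfolding vecs_def supp_def using not_less by blast

lemma supp_eq_empty_iff: "supp x = {} \<longleftrightarrow> x = (\<lambda>_. 0)"
  unfolding supp_def by auto

lemma coord_space_lessThan: "coord_space n {..<n} = vecs n"
  unfolding coord_space_def using supp_subset_lessThan by blast

lemma bij_betw_coord_space_PiE:
  assumes "T \<subseteq> {..<n}"
  shows "bij_betw (\<lambda>x. restrict x T) (coord_space n T) (PiE T (\<lambda>_. UNIV))"
proof (rule bij_betw_byWitness[where f'="\<lambda>f i. if i \<in> T then f i else 0"])
  show "\<forall>x\<in>coord_space n T. (\<lambda>i. if i \<in> T then restrict x T i else 0) = x"
    by (force simp: coord_space_def supp_def)
  show "(\<lambda>f i. if i \<in> T then f i else 0) ` PiE T (\<lambda>_. UNIV) \<subseteq> coord_space n T"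
    using assms by (auto simp: coord_space_def vecs_def supp_def)
qed (auto simp: PiE_def extensional_def)

lemma
  fixes T :: "nat set"
  assumes "T \<subseteq> {..<n}"
  shows card_coord_space: "card (coord_space n T :: (nat \<Rightarrow> 'a::{finite,zero}) set) = card (UNIV :: 'a set) ^ card T"
    and finite_coord_space: "finite (coord_space n T :: (nat \<Rightarrow> 'a::{finite,zero}) set)"
proof -
  have "finite T" using assms finite_subset by blast
  moreover note bij = bij_betw_coord_space_PiE[OF assms]
  ultimately show "card (coord_space n T :: (nat \<Rightarrow> 'a) set) = card (UNIV :: 'a set) ^ card T"
    and "finite (coord_space n T :: (nat \<Rightarrow> 'a) set)"
    by (simp_all add: bij_betw_same_card[OF bij] card_PiE bij_betw_finite[OF bij] finite_PiE)
qed

lemma finite_vecs: "finite (vecs n :: (nat \<Rightarrow> 'a::{finite,zero}) set)"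
  using finite_coord_space[of "{..<n}" n] by (simp add: coord_space_lessThan)

lemma supp_indicator: "supp (indicator S :: nat \<Rightarrow> 'a::zero_neq_one) = S"
  by (auto simp: supp_def indicator_eq_0_iff)

lemma indicator_in_vecs: "S \<subseteq> {..<n} \<Longrightarrow> indicator S \<in> vecs n"
  by (auto simp: vecs_def indicator_def)

section \<open>The combinatorial weight\<close>

lemma finite_wtF_candidates:
  "finite F \<Longrightarrow> finite {card \<A> |\<A>. \<A> \<subseteq> F \<and> supp x \<subseteq> \<Union>\<A>}"
  by (rule finite_subset[of _ "card ` Pow F"]) auto

lemma wtF_le_card:
  assumes "finite F" "\<A> \<subseteq> F" "supp x \<subseteq> \<Union>\<A>"
  shows "wtF F x \<le> card \<A>"
  unfolding wtF_def using assms by (intro Min_le finite_wtF_candidates) auto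

lemma wtF_attained:
  assumes "finite F" "supp x \<subseteq> \<Union>F"
  obtains \<A> where "\<A> \<subseteq> F" "supp x \<subseteq> \<Union>\<A>" "card \<A> = wtF F x"
proof -
  let ?S = "{card \<A> |\<A>. \<A> \<subseteq> F \<and> supp x \<subseteq> \<Union>\<A>}"
  have "card F \<in> ?S" using assms(2) by auto
  then have "Min ?S \<in> ?S" using finite_wtF_candidates[OF assms(1)] by (intro Min_in) auto
  then show ?thesis using that unfolding wtF_def by auto
qed

lemma wtF_mono:
  assumes "finite F" "supp y \<subseteq> \<Union>F" "supp x \<subseteq> supp y"
  shows "wtF F x \<le> wtF F y"
proof -
  obtain \<A> where "\<A> \<subseteq> F" "supp y \<subseteq> \<Union>\<A>" "card \<A> = wtF F y"
    using wtF_attained[OF assms(1,2)] .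
  then show ?thesis using wtF_le_card[OF assms(1), of \<A> x] assms(3) by auto
qed

lemma wtF_eq_0_iff:
  assumes "finite F" "supp x \<subseteq> \<Union>F"
  shows "wtF F x = 0 \<longleftrightarrow> x = (\<lambda>_. 0)"
proof
  assume "wtF F x = 0"
  moreover obtain \<A> where "\<A> \<subseteq> F" "supp x \<subseteq> \<Union>\<A>" "card \<A> = wtF F x"
    using wtF_attained[OF assms] .
  ultimately have "\<A> = {}" using finite_subset[OF _ assms(1)] by auto
  then show "x = (\<lambda>_. 0)"
    using \<open>supp x \<subseteq> \<Union>\<A>\<close> supp_eq_empty_iff by auto
qed (use wtF_le_card[OF assms(1), of "{}"] supp_eq_empty_iff in auto)

lemma wtF_le_one: "finite F \<Longrightarrow> C \<in> F \<Longrightarrow> supp x \<subseteq> C \<Longrightarrow> wtF F x \<le> 1"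
  using wtF_le_card[of F "{C}" x] by auto

lemma wtF_le_one_imp_in_block:
  assumes "finite F" "supp x \<subseteq> \<Union>F" "wtF F x \<le> 1" "supp x \<noteq> {}"
  obtains C where "C \<in> F" "supp x \<subseteq> C"
proof -
  obtain \<A> where A: "\<A> \<subseteq> F" "supp x \<subseteq> \<Union>\<A>" "card \<A> \<le> 1"
    using wtF_attained[OF assms(1,2)] assms(3) by metis
  have "\<A> \<noteq> {}" using A(2) assms(4) by blast
  with A(3) finite_subset[OF A(1) assms(1)] obtain C where "\<A> = {C}"
    by (metis card_0_eq card_1_singletonE le_SucE le_zero_eq One_nat_def)
  then show ?thesis using A that by blast
qed

section \<open>Weight distributions\<close>

definition wt_distrib :: "nat set set \<Rightarrow> (nat \<Rightarrow> 'a::zero) set \<Rightarrow> nat \<Rightarrow> nat" where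
  "wt_distrib F C i = card {c \<in> C. wtF F c = i}"

lemma sum_wtF_eq_sum_wt_distrib:
  fixes g :: "nat \<Rightarrow> 'b::comm_semiring_1"
  assumes "finite C" "\<forall>c\<in>C. wtF F c \<le> N"
  shows "(\<Sum>c\<in>C. g (wtF F c)) = (\<Sum>i\<le>N. of_nat (wt_distrib F C i) * g i)"
proof -
  have "(\<Sum>c\<in>C. g (wtF F c)) = (\<Sum>i\<le>N. \<Sum>c\<in>{c \<in> C. wtF F c = i}. g (wtF F c))"
    using sum.group[OF assms(1) finite_atMost, of "wtF F" N "\<lambda>c. g (wtF F c)"] assms(2)
    by (simp add: image_subset_iff)
  also have "\<dots> = (\<Sum>i\<le>N. of_nat (wt_distrib F C i) * g i)"
    unfolding wt_distrib_def by (rule sum.cong) auto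
  finally show ?thesis .
qed

lemma sum_wtF_eq_if_wt_distrib_eq:
  fixes g :: "nat \<Rightarrow> 'b::comm_semiring_1" and C1 C2 :: "(nat \<Rightarrow> 'a::zero) set"
  assumes "finite C1" "finite C2" "wt_distrib F C1 = wt_distrib F C2"
  shows "(\<Sum>c\<in>C1. g (wtF F c)) = (\<Sum>c\<in>C2. g (wtF F c))"
proof -
  define N where "N = Max (insert 0 (wtF F ` (C1 \<union> C2)))"
  have "\<forall>c\<in>C1. wtF F c \<le> N" "\<forall>c\<in>C2. wtF F c \<le> N"
    using assms(1,2) unfolding N_def by simp_all
  then show ?thesis
    using sum_wtF_eq_sum_wt_distrib[OF assms(1), of F _ g] sum_wtF_eq_sum_wt_distrib[OF assms(2), of F _ g]
      assms(3) by simp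
qed

lemma card_wtF_le_eq_if_wt_distrib_eq:
  fixes C1 C2 :: "(nat \<Rightarrow> 'a::zero) set"
  assumes "finite C1" "finite C2" "wt_distrib F C1 = wt_distrib F C2"
  shows "card {c \<in> C1. wtF F c \<le> w} = card {c \<in> C2. wtF F c \<le> w}"
  using sum_wtF_eq_if_wt_distrib_eq[OF assms, of "\<lambda>v. if v \<le> w then 1 :: nat else 0"] assms(1,2)
  by (simp add: sum.If_cases Int_def)

lemma image_wtF_eq_if_wt_distrib_eq:
  fixes C1 C2 :: "(nat \<Rightarrow> 'a::zero) set"
  assumes "finite C1" "finite C2" "wt_distrib F C1 = wt_distrib F C2"
  shows "wtF F ` C1 = wtF F ` C2"
proof -
  have "wtF F ` C = {i. wt_distrib F C i \<noteq> 0}" if "finite C" for C :: "(nat \<Rightarrow> 'a) set"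
    using that by (auto simp: wt_distrib_def)
  from this[OF assms(1)] this[OF assms(2)] show ?thesis using assms(3) by simp
qed

lemma weight_enum_eq_iff_wt_distrib_eq:
  fixes C1 C2 :: "(nat \<Rightarrow> 'a::zero) set"
  assumes "finite C1" "finite C2"
  shows "weight_enum F C1 = weight_enum F C2 \<longleftrightarrow> wt_distrib F C1 = wt_distrib F C2"
proof
  assume W: "weight_enum F C1 = weight_enum F C2"
  define N where "N = Max (insert 0 (wtF F ` (C1 \<union> C2)))"
  have N: "\<forall>c\<in>C. wtF F c \<le> N" if "C \<in> {C1, C2}" for C
    using assms that unfolding N_def by auto
  define p where "p C = (\<Sum>i\<le>N. monom (int (wt_distrib F C i)) i)" for C :: "(nat \<Rightarrow> 'a) set"
  \<comment> \<open>\<open>W\<^sub>C(1, y)\<close> is the polynomial \<open>p C\<close> whose coefficients form the weight distribution.\<close>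
  have "poly (p C) y = weight_enum F C 1 y" if "C \<in> {C1, C2}" for C y
    using sum_wtF_eq_sum_wt_distrib[OF _ N[OF that], of "\<lambda>i. y ^ i"] that assms
    by (auto simp: p_def poly_sum poly_monom weight_enum_def)
  then have "poly (p C1) = poly (p C2)" using W by auto
  then have "p C1 = p C2" by (simp only: poly_eq_poly_eq_iff)
  show "wt_distrib F C1 = wt_distrib F C2"
  proof
    fix j
    show "wt_distrib F C1 j = wt_distrib F C2 j"
    proof (cases "j \<le> N")
      case True
      have "int (wt_distrib F C1 j) = int (wt_distrib F C2 j)"
        using arg_cong[OF \<open>p C1 = p C2\<close>, of "\<lambda>p. coeff p j"] by (simp add: p_def coeff_sum_monom[OF True])
      then show ?thesis by simp
    next
      case False
      then have "wt_distrib F C j = 0" if "C \<in> {C1, C2}" for C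
        using N[OF that] by (fastforce simp: wt_distrib_def card_eq_0_iff)
      then show ?thesis by simp
    qed
  qed
next
  assume D: "wt_distrib F C1 = wt_distrib F C2"
  show "weight_enum F C1 = weight_enum F C2"
  proof (intro ext)
    fix x y :: int
    show "weight_enum F C1 x y = weight_enum F C2 x y"
      unfolding weight_enum_def Let_def image_wtF_eq_if_wt_distrib_eq[OF assms D]
      by (rule sum_wtF_eq_if_wt_distrib_eq[OF assms D])
  qed
qed

lemma wt_distrib_in_block:
  fixes C :: "(nat \<Rightarrow> 'a::zero) set"
  assumes "finite F" "K \<in> F" "finite C" "(\<lambda>_. 0) \<in> C" "\<forall>c\<in>C. supp c \<subseteq> K"
  shows "wt_distrib F C = (\<lambda>i. if i = 0 then 1 else if i = 1 then card C - 1 else 0)"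
proof -
  have wt: "wtF F c = (if c = (\<lambda>_. 0) then 0 else 1)" if "c \<in> C" for c
    using wtF_le_one[OF assms(1,2)] wtF_eq_0_iff[OF assms(1), of c] assms(2,5) that by fastforce
  have "{c \<in> C. wtF F c = 0} = {\<lambda>_. 0}" "{c \<in> C. wtF F c = 1} = C - {\<lambda>_. 0}"
    "i > 1 \<Longrightarrow> {c \<in> C. wtF F c = i} = {}" for i
    using wt assms(4) by (auto split: if_splits)
  then show ?thesis using assms(3,4) by (auto simp: wt_distrib_def fun_eq_iff)
qed

section \<open>Duality\<close>

lemma linear_codeD:
  assumes "linear_code n C"
  shows "C \<subseteq> vecs n" and "(\<lambda>_. 0) \<in> C"
    and "x \<in> C \<Longrightarrow> y \<in> C \<Longrightarrow> (\<lambda>i. x i + y i) \<in> C"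
    and "x \<in> C \<Longrightarrow> (\<lambda>i. a * x i) \<in> C"
  using assms unfolding linear_code_def by blast+

lemma finite_linear_code: "linear_code n (C :: (nat \<Rightarrow> 'a::{finite,field}) set) \<Longrightarrow> finite C"
  using linear_codeD(1) finite_vecs finite_subset by metis

lemma linear_code_coord_space: "linear_code n (coord_space n T)"
  unfolding linear_code_def coord_space_def vecs_def supp_def by (auto simp: subset_iff) (metis add_0)

definition dot :: "nat \<Rightarrow> (nat \<Rightarrow> 'a::field) \<Rightarrow> (nat \<Rightarrow> 'a) \<Rightarrow> 'a" where
  "dot n x y = (\<Sum>i<n. x i * y i)"

lemma dot_commute: "dot n x y = dot n y x"
  by (simp add: dot_def mult.commute)

lemma dot_add_right: "dot n x (\<lambda>i. y i + z i) = dot n x y + dot n x z"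
  by (simp add: dot_def distrib_left sum.distrib)

lemma dot_scale_right: "dot n x (\<lambda>i. a * y i) = a * dot n x y"
  by (simp add: dot_def sum_distrib_left mult.left_commute)

lemma dot_add_left: "dot n (\<lambda>i. x i + y i) z = dot n x z + dot n y z"
  by (simp add: dot_def distrib_right sum.distrib)

lemma dot_scale_left: "dot n (\<lambda>i. a * x i) y = a * dot n x y"
  by (simp add: dot_def sum_distrib_left mult.assoc)

lemma dual_code_eq: "dual_code n C = {u \<in> vecs n. \<forall>c\<in>C. dot n u c = 0}"
  by (simp add: dual_code_def dot_def)

lemma linear_code_dual_code: "linear_code n (dual_code n C)"
  unfolding linear_code_def dual_code_eq vecs_def
  by (auto simp: dot_add_left dot_scale_left) (simp add: dot_def)

lemma dot_indicator:
  assumes "S \<subseteq> {..<n}"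
  shows "dot n x (indicator S) = sum x S"
proof -
  have "dot n x (indicator S) = (\<Sum>i<n. if i \<in> S then x i else 0)"
    unfolding dot_def by (rule sum.cong) (auto simp: indicator_def)
  also have "\<dots> = sum x S" using assms by (simp add: sum.inter_restrict[symmetric] Int_absorb1)
  finally show ?thesis .
qed

lemma card_field_ge_2: "2 \<le> card (UNIV :: 'a::{finite,field} set)"
proof -
  have "card {0::'a, 1} \<le> card (UNIV :: 'a set)" by (rule card_mono) auto
  then show ?thesis by simp
qed

lemma card_linear_code_eq_mult_card_orth:
  fixes Y :: "(nat \<Rightarrow> 'a::{finite,field}) set"
  assumes Y: "linear_code n Y" and y0: "y0 \<in> Y" "dot n x y0 \<noteq> 0"
  shows "card Y = card (UNIV :: 'a set) * card {y \<in> Y. dot n x y = 0}"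
proof -
  define u where "u = (\<lambda>i. inverse (dot n x y0) * y0 i)"
  have u: "u \<in> Y" "dot n x u = 1"
    using y0 linear_codeD(4)[OF Y] by (auto simp: u_def dot_scale_right)
  define K where "K = {y \<in> Y. dot n x y = 0}"
  have "bij_betw (\<lambda>y. (dot n x y, \<lambda>i. y i - dot n x y * u i)) Y (UNIV \<times> K)"
  proof (rule bij_betw_byWitness[where f'="\<lambda>(a, k) i. k i + a * u i"])
    show "\<forall>p\<in>UNIV \<times> K. (\<lambda>y. (dot n x y, \<lambda>i. y i - dot n x y * u i)) ((\<lambda>(a, k) i. k i + a * u i) p) = p"
      using u by (auto simp: K_def dot_add_right dot_scale_right)
    have "(\<lambda>i. y i - dot n x y * u i) \<in> K" if "y \<in> Y" for y
      using linear_codeD(3)[OF Y that linear_codeD(4)[OF Y u(1), of "- dot n x y"]]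
        dot_add_right[of n x y "\<lambda>i. - dot n x y * u i"] dot_scale_right[of n x "- dot n x y" u] u(2)
      unfolding K_def by simp
    then show "(\<lambda>y. (dot n x y, \<lambda>i. y i - dot n x y * u i)) ` Y \<subseteq> UNIV \<times> K"
      by blast
    show "(\<lambda>(a, k) i. k i + a * u i) ` (UNIV \<times> K) \<subseteq> Y"
      using u linear_codeD(3,4)[OF Y] by (auto simp: K_def)
  qed auto
  then show ?thesis unfolding K_def by (simp add: bij_betw_same_card card_cartesian_product)
qed

lemma card_orth_fiber:
  fixes Y :: "(nat \<Rightarrow> 'a::{finite,field}) set"
  assumes "linear_code n Y"
  shows "card (UNIV :: 'a set) * card {y \<in> Y. dot n x y = 0}
    = card Y + (if \<forall>y\<in>Y. dot n x y = 0 then (card (UNIV :: 'a set) - 1) * card Y else 0)"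
proof (cases "\<forall>y\<in>Y. dot n x y = 0")
  case True
  then have "{y \<in> Y. dot n x y = 0} = Y" by auto
  then show ?thesis using True card_field_ge_2[where 'a='a] by (simp add: algebra_simps)
next
  case False
  then show ?thesis using card_linear_code_eq_mult_card_orth[OF assms] by auto
qed

lemma sum_card_orth:
  fixes X Y :: "(nat \<Rightarrow> 'a::{finite,field}) set"
  assumes X: "linear_code n X" and Y: "linear_code n Y"
  shows "card (UNIV :: 'a set) * (\<Sum>x\<in>X. card {y \<in> Y. dot n x y = 0})
    = card X * card Y + card {x \<in> X. \<forall>y\<in>Y. dot n x y = 0} * ((card (UNIV :: 'a set) - 1) * card Y)"
  using finite_linear_code[OF X]
  by (simp add: sum_distrib_left card_orth_fiber[OF Y] sum.distrib sum.If_cases Int_def)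

\<comment> \<open>Double counting of the orthogonal pairs in \<open>X \<times> Y\<close>.\<close>
lemma card_orth_mult_card:
  fixes X Y :: "(nat \<Rightarrow> 'a::{finite,field}) set"
  assumes X: "linear_code n X" and Y: "linear_code n Y"
  shows "card {x \<in> X. \<forall>y\<in>Y. dot n x y = 0} * card Y = card {y \<in> Y. \<forall>x\<in>X. dot n x y = 0} * card X"
proof -
  let ?q = "card (UNIV :: 'a set)"
  have "(\<Sum>x\<in>X. card {y \<in> Y. dot n x y = 0}) = (\<Sum>x\<in>X. \<Sum>y\<in>Y. if dot n x y = 0 then 1 else 0)"
    using finite_linear_code[OF Y] by (simp add: sum.If_cases Int_def)
  also have "\<dots> = (\<Sum>y\<in>Y. \<Sum>x\<in>X. if dot n y x = 0 then 1 else 0)"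
    by (subst sum.swap) (simp add: dot_commute)
  also have "\<dots> = (\<Sum>y\<in>Y. card {x \<in> X. dot n y x = 0})"
    using finite_linear_code[OF X] by (simp add: sum.If_cases Int_def)
  finally have "card X * card Y + card {x \<in> X. \<forall>y\<in>Y. dot n x y = 0} * ((?q - 1) * card Y)
      = card Y * card X + card {y \<in> Y. \<forall>x\<in>X. dot n y x = 0} * ((?q - 1) * card X)"
    using sum_card_orth[OF X Y] sum_card_orth[OF Y X] by metis
  then have "(?q - 1) * (card {x \<in> X. \<forall>y\<in>Y. dot n x y = 0} * card Y)
      = (?q - 1) * (card {y \<in> Y. \<forall>x\<in>X. dot n x y = 0} * card X)"
    by (simp add: dot_commute algebra_simps)
  moreover have "?q - 1 \<noteq> 0" using card_field_ge_2[where 'a='a] by simp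
  ultimately show ?thesis by simp
qed

lemma orth_coord_space_iff:
  fixes y :: "nat \<Rightarrow> 'a::field"
  assumes "y \<in> vecs n"
  shows "(\<forall>x\<in>coord_space n T. dot n x y = 0) \<longleftrightarrow> y \<in> coord_space n ({..<n} - T)"
proof
  assume orth: "\<forall>x\<in>coord_space n T. dot n x y = 0"
  have "y i = 0" if "i \<in> T" "i < n" for i
  proof -
    have "indicator {i} \<in> coord_space n T"
      using that by (simp add: coord_space_def supp_indicator indicator_in_vecs)
    then have "dot n (indicator {i}) y = 0" using orth by blast
    then show ?thesis using dot_indicator[of "{i}" n y] \<open>i < n\<close> by (simp add: dot_commute)
  qed
  then show "y \<in> coord_space n ({..<n} - T)"
    using assms supp_subset_lessThan[OF assms] by (auto simp: coord_space_def supp_def)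
next
  assume "y \<in> coord_space n ({..<n} - T)"
  then have "x i * y i = 0" if "x \<in> coord_space n T" for x i
    using that by (auto simp: coord_space_def supp_def)
  then show "\<forall>x\<in>coord_space n T. dot n x y = 0" unfolding dot_def by (meson sum.neutral)
qed

lemma dual_code_coord_space:
  "dual_code n (coord_space n T :: (nat \<Rightarrow> 'a::field) set) = coord_space n ({..<n} - T)"
proof -
  have "u \<in> dual_code n (coord_space n T) \<longleftrightarrow> u \<in> coord_space n ({..<n} - T)" for u :: "nat \<Rightarrow> 'a"
  proof (cases "u \<in> vecs n")
    case True
    then show ?thesis using orth_coord_space_iff[OF True, of T] by (simp add: dual_code_eq dot_commute[of n u])
  qed (simp add: dual_code_eq coord_space_def)
  then show ?thesis by blast
qed

lemma card_dual_code_inter_coord_space: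
  fixes C :: "(nat \<Rightarrow> 'a::{finite,field}) set"
  assumes C: "linear_code n C" and T: "T \<subseteq> {..<n}"
  shows "card (dual_code n C \<inter> coord_space n T) * card C
    = card (C \<inter> coord_space n ({..<n} - T)) * card (UNIV :: 'a set) ^ card T"
proof -
  have X: "{x \<in> coord_space n T. \<forall>c\<in>C. dot n x c = 0} = dual_code n C \<inter> coord_space n T"
    by (auto simp: dual_code_eq coord_space_def)
  have Y: "{c \<in> C. \<forall>x\<in>coord_space n T. dot n x c = 0} = C \<inter> coord_space n ({..<n} - T)"
    using orth_coord_space_iff linear_codeD(1)[OF C] by blast
  show ?thesis
    using card_orth_mult_card[OF linear_code_coord_space C, of T] unfolding X Y card_coord_space[OF T] .
qed

definition line_code :: "(nat \<Rightarrow> 'a::field) \<Rightarrow> (nat \<Rightarrow> 'a) set" where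
  "line_code u = range (\<lambda>t i. t * u i)"

lemma linear_code_line_code:
  assumes "u \<in> vecs n"
  shows "linear_code n (line_code u)"
  unfolding linear_code_def line_code_def vecs_def
proof (intro conjI ballI allI)
  show "(\<lambda>_. 0) \<in> range (\<lambda>t i. t * u i)" by (auto intro: range_eqI[of _ _ 0])
  show "(\<lambda>i. x i + y i) \<in> range (\<lambda>t i. t * u i)" if "x \<in> range (\<lambda>t i. t * u i)" "y \<in> range (\<lambda>t i. t * u i)" for x y
    using that by (auto intro: range_eqI[of _ _ "_ + _"] simp: distrib_right)
  show "(\<lambda>i. a * x i) \<in> range (\<lambda>t i. t * u i)" if "x \<in> range (\<lambda>t i. t * u i)" for a x
    using that by (auto intro: range_eqI[of _ _ "_ * _"] simp: mult.assoc)
qed (use assms in \<open>auto simp: vecs_def\<close>)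

lemma supp_line_code: "c \<in> line_code u \<Longrightarrow> supp c \<subseteq> supp u"
  by (auto simp: line_code_def supp_def)

lemma card_line_code:
  assumes "u \<noteq> (\<lambda>_. 0)"
  shows "card (line_code u :: (nat \<Rightarrow> 'a::{finite,field}) set) = card (UNIV :: 'a set)"
proof -
  obtain i where "u i \<noteq> 0" using assms by auto
  then have "inj (\<lambda>t i. t * u i)" by (auto intro!: injI dest: fun_cong[where x=i])
  then show ?thesis unfolding line_code_def by (simp add: card_image)
qed

lemma dual_code_line_code: "dual_code n (line_code u) = {x \<in> vecs n. dot n x u = 0}"
  by (auto simp: dual_code_eq line_code_def dot_scale_right)

lemma wt_distrib_coord_space_in_block:
  assumes "finite F" "K \<in> F" "S \<subseteq> K" "S \<subseteq> {..<n}"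
  shows "wt_distrib F (coord_space n S :: (nat \<Rightarrow> 'a::{finite,zero}) set)
    = (\<lambda>i. if i = 0 then 1 else if i = 1 then card (UNIV :: 'a set) ^ card S - 1 else 0)"
proof -
  have "(\<lambda>_. 0) \<in> (coord_space n S :: (nat \<Rightarrow> 'a) set)" by (simp add: coord_space_def vecs_def supp_def)
  moreover have "\<forall>c\<in>coord_space n S. supp c \<subseteq> K" using assms(3) by (auto simp: coord_space_def)
  ultimately show ?thesis
    using wt_distrib_in_block[OF assms(1,2) finite_coord_space[OF assms(4)]]
    unfolding card_coord_space[OF assms(4)] by blast
qed

lemma wt_distrib_line_code_in_block:
  assumes "finite F" "K \<in> F" "u \<in> vecs n" "u \<noteq> (\<lambda>_. 0)" "supp u \<subseteq> K"
  shows "wt_distrib F (line_code u :: (nat \<Rightarrow> 'a::{finite,field}) set)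
    = (\<lambda>i. if i = 0 then 1 else if i = 1 then card (UNIV :: 'a set) - 1 else 0)"
proof -
  have L: "linear_code n (line_code u)" using assms(3) by (rule linear_code_line_code)
  have "\<forall>c\<in>line_code u. supp c \<subseteq> K" using supp_line_code assms(5) by blast
  then show ?thesis
    using wt_distrib_in_block[OF assms(1,2) finite_linear_code[OF L] linear_codeD(2)[OF L]]
    unfolding card_line_code[OF assms(4)] by blast
qed

lemma admits_MacWilliamsD:
  fixes C1 C2 :: "(nat \<Rightarrow> 'a::{finite,field}) set"
  assumes "admits_MacWilliams TYPE('a) n F" "linear_code n C1" "linear_code n C2"
    "weight_enum F C1 = weight_enum F C2"
  shows "weight_enum F (dual_code n C1) = weight_enum F (dual_code n C2)"
  using assms unfolding admits_MacWilliams_def by blast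

section \<open>Partitions\<close>

lemma sum_subsets_card_complement:
  assumes "finite F" "j \<le> card F"
  shows "(\<Sum>R | R \<subseteq> F \<and> card R = j. f R) = (\<Sum>R | R \<subseteq> F \<and> card R = card F - j. f (F - R))"
  by (rule sum.reindex_bij_witness[where i="\<lambda>R. F - R" and j="\<lambda>R. F - R"])
    (use assms in \<open>auto simp: card_Diff_subset finite_subset double_diff\<close>)

lemma eq_if_sum_mult_choose_eq:
  fixes a b :: "nat \<Rightarrow> nat"
  assumes "\<And>j. j \<le> m \<Longrightarrow> (\<Sum>i\<le>m. a i * ((m - i) choose j)) = (\<Sum>i\<le>m. b i * ((m - i) choose j))"
  shows "i \<le> m \<Longrightarrow> a i = b i"
proof (induction i rule: less_induct)
  case (less i)
  \<comment> \<open>For \<open>j = m - i\<close> the system is triangular: only indices \<open>\<le> i\<close> contribute, and \<open>i\<close> with coefficient 1.\<close>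
  have split: "(\<Sum>l\<le>m. f l * ((m - l) choose (m - i))) = (\<Sum>l<i. f l * ((m - l) choose (m - i))) + f i"
    for f :: "nat \<Rightarrow> nat"
  proof -
    have "(\<Sum>l\<le>m. f l * ((m - l) choose (m - i))) = (\<Sum>l\<le>i. f l * ((m - l) choose (m - i)))"
      using less.prems by (intro sum.mono_neutral_right) auto
    then show ?thesis by (simp add: lessThan_Suc_atMost[symmetric])
  qed
  have "(\<Sum>l<i. a l * ((m - l) choose (m - i))) = (\<Sum>l<i. b l * ((m - l) choose (m - i)))"
    using less.IH less.prems by (intro sum.cong) auto
  then show ?case using assms[of "m - i"] split[of a] split[of b] by simp
qed

definition blocks_meeting :: "nat set set \<Rightarrow> (nat \<Rightarrow> 'a::zero) \<Rightarrow> nat set set" where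
  "blocks_meeting F x = {A \<in> F. A \<inter> supp x \<noteq> {}}"

definition block_count :: "nat \<Rightarrow> nat set set \<Rightarrow> (nat \<Rightarrow> 'a::zero) set \<Rightarrow> nat \<Rightarrow> nat" where
  "block_count n F C j = (\<Sum>R | R \<subseteq> F \<and> card R = j. card (C \<inter> coord_space n (\<Union>(F - R))))"

context
  fixes n :: nat and F :: "nat set set"
  assumes partition: "partition_on {..<n} F"
begin

lemma finite_partition: "finite F"
  using finite_elements[OF _ partition] by simp

lemma partition_block_eq: "X \<in> F \<Longrightarrow> Y \<in> F \<Longrightarrow> i \<in> X \<Longrightarrow> i \<in> Y \<Longrightarrow> X = Y"
  using disjointD[OF partition_onD2[OF partition]] by blast

lemma coord_space_Union_iff:
  assumes "S \<subseteq> F" "x \<in> vecs n"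
  shows "x \<in> coord_space n (\<Union>S) \<longleftrightarrow> blocks_meeting F x \<subseteq> S"
proof -
  have "supp x \<subseteq> \<Union>F" using supp_subset_lessThan[OF assms(2)] partition_onD1[OF partition] by simp
  then show ?thesis
    using assms partition_block_eq unfolding coord_space_def blocks_meeting_def by blast
qed

lemma wtF_partition:
  assumes "x \<in> vecs n"
  shows "wtF F x = card (blocks_meeting F x)"
proof (rule antisym)
  have "x \<in> coord_space n (\<Union>(blocks_meeting F x))"
    using coord_space_Union_iff[OF _ assms] by (simp add: blocks_meeting_def)
  then show "wtF F x \<le> card (blocks_meeting F x)"
    by (intro wtF_le_card finite_partition) (auto simp: blocks_meeting_def coord_space_def)
  have "supp x \<subseteq> \<Union>F" using supp_subset_lessThan[OF assms] partition_onD1[OF partition] by simp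
  then obtain \<A> where A: "\<A> \<subseteq> F" "supp x \<subseteq> \<Union>\<A>" "card \<A> = wtF F x"
    using wtF_attained finite_partition by blast
  then have "x \<in> coord_space n (\<Union>\<A>)" using assms by (simp add: coord_space_def)
  then have "blocks_meeting F x \<subseteq> \<A>" using coord_space_Union_iff[OF A(1) assms] by blast
  then show "card (blocks_meeting F x) \<le> wtF F x"
    using A(1,3) card_mono finite_partition finite_subset by metis
qed

lemma wtF_le_card_partition:
  assumes "x \<in> vecs n"
  shows "wtF F x \<le> card F"
  unfolding wtF_partition[OF assms] blocks_meeting_def by (rule card_mono[OF finite_partition]) blast

lemma card_Union_partition:
  assumes "\<forall>A\<in>F. card A = k" "S \<subseteq> F"
  shows "card (\<Union>S) = k * card S"
proof -
  have "\<forall>A\<in>S. finite A"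
    using assms(2) partition_onD1[OF partition] by (metis Union_upper finite_lessThan finite_subset subsetD)
  then have "card (\<Union>S) = sum card S"
    using card_Union_disjoint pairwise_subset[OF partition_onD2[OF partition] assms(2)] by blast
  also have "\<dots> = k * card S" using assms by (simp add: subset_iff)
  finally show ?thesis .
qed

lemma block_count_eq_sum_choose:
  assumes "C \<subseteq> vecs n" "finite C"
  shows "block_count n F C j = (\<Sum>c\<in>C. (card F - wtF F c) choose j)"
proof -
  define Rs where "Rs = {R. R \<subseteq> F \<and> card R = j}"
  have "finite Rs" unfolding Rs_def using finite_partition by simp
  have avoid: "c \<in> coord_space n (\<Union>(F - R)) \<longleftrightarrow> R \<subseteq> F - blocks_meeting F c" if "c \<in> C" "R \<in> Rs" for c R
    using coord_space_Union_iff[of "F - R" c] that assms(1) by (auto simp: Rs_def blocks_meeting_def)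
  have "block_count n F C j = (\<Sum>R\<in>Rs. \<Sum>c\<in>C. if c \<in> coord_space n (\<Union>(F - R)) then 1 else 0)"
    using assms(2) by (simp add: block_count_def Rs_def sum.If_cases Int_def)
  also have "\<dots> = (\<Sum>c\<in>C. \<Sum>R\<in>Rs. if R \<subseteq> F - blocks_meeting F c then 1 else 0)"
    using avoid by (subst sum.swap) (auto intro!: sum.cong)
  also have "\<dots> = (\<Sum>c\<in>C. card {R. R \<subseteq> F - blocks_meeting F c \<and> card R = j})"
    using \<open>finite Rs\<close> by (intro sum.cong) (auto simp: sum.If_cases Int_def Rs_def intro!: arg_cong[where f=card])
  also have "\<dots> = (\<Sum>c\<in>C. (card F - wtF F c) choose j)"
    using assms(1) finite_partition
    by (intro sum.cong) (auto simp: n_subsets card_Diff_subset wtF_partition blocks_meeting_def)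
  finally show ?thesis .
qed

lemma block_count_dual_code:
  fixes C :: "(nat \<Rightarrow> 'a::{finite,field}) set"
  assumes k: "\<forall>A\<in>F. card A = k" and C: "linear_code n C" and j: "j \<le> card F"
  shows "block_count n F (dual_code n C) j * card C
    = card (UNIV :: 'a set) ^ (k * (card F - j)) * block_count n F C (card F - j)"
proof -
  let ?q = "card (UNIV :: 'a set)"
  have "card (dual_code n C \<inter> coord_space n (\<Union>(F - R))) * card C
      = ?q ^ (k * (card F - j)) * card (C \<inter> coord_space n (\<Union>R))"
    if "R \<subseteq> F" "card R = j" for R
  proof -
    have "{..<n} - \<Union>(F - R) = \<Union>R"
      using diff_Union_pairwise_disjoint[OF partition_onD2[OF partition], of "F - R"]
        partition_onD1[OF partition] that(1) by (simp add: double_diff)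
    moreover have "card (\<Union>(F - R)) = k * (card F - j)"
      using card_Union_partition[OF k, of "F - R"] that finite_partition
      by (simp add: card_Diff_subset finite_subset)
    moreover have "\<Union>(F - R) \<subseteq> {..<n}" using partition_onD1[OF partition] by blast
    ultimately show ?thesis
      using card_dual_code_inter_coord_space[OF C, of "\<Union>(F - R)"] by (simp add: mult.commute)
  qed
  then have "block_count n F (dual_code n C) j * card C
      = ?q ^ (k * (card F - j)) * (\<Sum>R | R \<subseteq> F \<and> card R = j. card (C \<inter> coord_space n (\<Union>R)))"
    by (simp add: block_count_def sum_distrib_left sum_distrib_right)
  also have "\<dots> = ?q ^ (k * (card F - j)) * block_count n F C (card F - j)"
    unfolding block_count_def sum_subsets_card_complement[OF finite_partition j] ..
  finally show ?thesis .
qed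

lemma wt_distrib_eq_0_above_card:
  assumes "C \<subseteq> vecs n" "card F < i"
  shows "wt_distrib F C i = 0"
proof -
  have "{c \<in> C. wtF F c = i} = {}" using wtF_le_card_partition assms by fastforce
  then show ?thesis unfolding wt_distrib_def by (simp only: card.empty)
qed

lemma block_count_eq_sum_wt_distrib:
  assumes "C \<subseteq> vecs n" "finite C"
  shows "block_count n F C j = (\<Sum>i\<le>card F. wt_distrib F C i * ((card F - i) choose j))"
  using block_count_eq_sum_choose[OF assms] wtF_le_card_partition assms(1)
    sum_wtF_eq_sum_wt_distrib[OF assms(2), of F "card F" "\<lambda>i. (card F - i) choose j"] by auto

lemma wt_distrib_eq_if_block_count_eq:
  fixes C1 C2 :: "(nat \<Rightarrow> 'a::zero) set"
  assumes C: "C1 \<subseteq> vecs n" "finite C1" "C2 \<subseteq> vecs n" "finite C2"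
    and counts: "\<And>j. j \<le> card F \<Longrightarrow> block_count n F C1 j = block_count n F C2 j"
  shows "wt_distrib F C1 = wt_distrib F C2"
proof
  fix i
  show "wt_distrib F C1 i = wt_distrib F C2 i"
  proof (cases "i \<le> card F")
    case True
    show ?thesis
      by (rule eq_if_sum_mult_choose_eq[OF _ True])
        (use counts in \<open>simp add: block_count_eq_sum_wt_distrib C\<close>)
  qed (simp add: wt_distrib_eq_0_above_card C)
qed

lemma wt_distrib_dual_code_eq:
  fixes C1 C2 :: "(nat \<Rightarrow> 'a::{finite,field}) set"
  assumes k: "\<forall>A\<in>F. card A = k" and C1: "linear_code n C1" and C2: "linear_code n C2"
    and W: "wt_distrib F C1 = wt_distrib F C2"
  shows "wt_distrib F (dual_code n C1) = wt_distrib F (dual_code n C2)"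
proof (rule wt_distrib_eq_if_block_count_eq)
  have fin: "finite C1" "finite C2" using C1 C2 by (simp_all add: finite_linear_code)
  have "card C1 = card C2" using sum_wtF_eq_if_wt_distrib_eq[OF fin W, of "\<lambda>_. 1 :: nat"] by simp
  moreover have "card C1 \<noteq> 0" using fin(1) linear_codeD(2)[OF C1] by auto
  moreover have "block_count n F C1 (card F - j) = block_count n F C2 (card F - j)" for j
    using sum_wtF_eq_if_wt_distrib_eq[OF fin W]
    by (simp add: block_count_eq_sum_choose fin linear_codeD(1)[OF C1] linear_codeD(1)[OF C2])
  ultimately show "block_count n F (dual_code n C1) j = block_count n F (dual_code n C2) j"
    if "j \<le> card F" for j
    using block_count_dual_code[OF k C1 that] block_count_dual_code[OF k C2 that]
    by (metis mult_right_cancel)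
qed (use linear_codeD(1) finite_linear_code linear_code_dual_code in blast)+

lemma wtF_coord_space_compl_lt:
  assumes "A \<in> F" "x \<in> coord_space n ({..<n} - A)"
  shows "wtF F x < card F"
proof -
  have "A \<noteq> {}" using partition_onD3[OF partition] assms(1) by blast
  then have "blocks_meeting F x \<subseteq> F - {A}"
    using assms partition_block_eq by (auto simp: blocks_meeting_def coord_space_def)
  then have "card (blocks_meeting F x) < card F"
    using finite_partition assms(1) by (meson card_Diff1_less card_mono finite_Diff le_less_trans)
  moreover have "x \<in> vecs n" using assms(2) by (simp add: coord_space_def)
  ultimately show ?thesis using wtF_partition[of x] by simp
qed

lemma wt_distrib_coord_space_compl_card_eq_0:
  assumes "A \<in> F"
  shows "wt_distrib F (coord_space n ({..<n} - A) :: (nat \<Rightarrow> 'a::zero) set) (card F) = 0"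
proof -
  have "{c \<in> coord_space n ({..<n} - A) :: (nat \<Rightarrow> 'a) set. wtF F c = card F} = {}"
    using wtF_coord_space_compl_lt[OF assms] by fastforce
  then show ?thesis unfolding wt_distrib_def by (simp only: card.empty)
qed

lemma wt_distrib_coord_space_compl_card_ne_0:
  assumes B: "B \<in> F" and T: "T \<subseteq> B" "card T < card B"
  shows "wt_distrib F (coord_space n ({..<n} - T) :: (nat \<Rightarrow> 'a::{finite,zero_neq_one}) set) (card F) \<noteq> 0"
proof -
  \<comment> \<open>Every block has a coordinate outside \<open>T\<close>, so the indicator of the complement meets them all.\<close>
  have "X - T \<noteq> {}" if X: "X \<in> F" for X
  proof (cases "X = B")
    case True
    then show ?thesis using T card_mono[of T X] finite_subset[OF T(1)] by fastforce
  next
    case False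
    then have "X - T = X" using partition_block_eq[OF X B] T(1) by blast
    then show ?thesis using partition_onD3[OF partition] X by auto
  qed
  then have "blocks_meeting F (indicator ({..<n} - T) :: nat \<Rightarrow> 'a) = F"
    using partition_onD1[OF partition] by (auto simp: blocks_meeting_def supp_indicator)
  moreover have vecs: "(indicator ({..<n} - T) :: nat \<Rightarrow> 'a) \<in> vecs n" by (rule indicator_in_vecs) blast
  ultimately have "indicator ({..<n} - T) \<in> {c \<in> coord_space n ({..<n} - T) :: (nat \<Rightarrow> 'a) set. wtF F c = card F}"
    using wtF_partition[OF vecs] by (simp add: coord_space_def supp_indicator)
  moreover have "finite {c \<in> coord_space n ({..<n} - T) :: (nat \<Rightarrow> 'a) set. wtF F c = card F}"
    using finite_coord_space[OF Diff_subset, of n T, where 'a='a] by simp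
  ultimately show ?thesis unfolding wt_distrib_def by (subst card_0_eq) blast+
qed

lemma unequal_blocks_not_MacWilliams:
  assumes A: "A \<in> F" and B: "B \<in> F" and AB: "card A < card B"
  shows "\<not> admits_MacWilliams TYPE('a::{finite,field}) n F"
proof
  assume MW: "admits_MacWilliams TYPE('a) n F"
  obtain T where T: "T \<subseteq> B" "card T = card A" using obtain_subset_with_card_n AB by (metis less_imp_le)
  have sub: "A \<subseteq> {..<n}" "T \<subseteq> {..<n}" using A B T(1) partition_onD1[OF partition] by blast+
  \<comment> \<open>The coordinate spaces of \<open>A\<close> and of \<open>T \<subseteq> B\<close> look alike, but only the dual of the second
    has a vector meeting every block.\<close>
  have "wt_distrib F (coord_space n A :: (nat \<Rightarrow> 'a) set) = wt_distrib F (coord_space n T :: (nat \<Rightarrow> 'a) set)"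
    using wt_distrib_coord_space_in_block[OF finite_partition A order_refl sub(1), where 'a='a]
      wt_distrib_coord_space_in_block[OF finite_partition B T(1) sub(2), where 'a='a, unfolded T(2)]
    by (rule trans[OF _ sym])
  then have "weight_enum F (coord_space n A :: (nat \<Rightarrow> 'a) set) = weight_enum F (coord_space n T :: (nat \<Rightarrow> 'a) set)"
    by (simp only: weight_enum_eq_iff_wt_distrib_eq[OF finite_coord_space finite_coord_space, OF sub])
  from admits_MacWilliamsD[OF MW linear_code_coord_space linear_code_coord_space this]
  have "weight_enum F (coord_space n ({..<n} - A) :: (nat \<Rightarrow> 'a) set)
      = weight_enum F (coord_space n ({..<n} - T) :: (nat \<Rightarrow> 'a) set)"
    by (simp only: dual_code_coord_space)
  then have "wt_distrib F (coord_space n ({..<n} - A) :: (nat \<Rightarrow> 'a) set)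
      = wt_distrib F (coord_space n ({..<n} - T) :: (nat \<Rightarrow> 'a) set)"
    by (simp only: weight_enum_eq_iff_wt_distrib_eq[OF finite_coord_space finite_coord_space, OF Diff_subset Diff_subset])
  then show False
    using wt_distrib_coord_space_compl_card_eq_0[OF A] wt_distrib_coord_space_compl_card_ne_0[OF B T(1)] AB T(2)
    by (metis less_irrefl)
qed

lemma MacWilliams_imp_k_partition:
  assumes "admits_MacWilliams TYPE('a::{finite,field}) n F"
  shows "\<exists>k. k_partition n F k"
proof (cases "F = {}")
  case True
  then show ?thesis using partition by (simp add: k_partition_def)
next
  case False
  then obtain A where A: "A \<in> F" by blast
  have "card B = card A" if "B \<in> F" for B
    using unequal_blocks_not_MacWilliams[OF A that] unequal_blocks_not_MacWilliams[OF that A] assms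
    by (meson linorder_neqE_nat)
  then show ?thesis using partition unfolding k_partition_def by blast
qed

end

section \<open>Overlapping basic sets\<close>

lemma finite_covering: "is_covering n F \<Longrightarrow> finite F"
  unfolding is_covering_def by (metis Pow_iff finite_Pow_iff finite_lessThan finite_subset subsetI)

lemma card_wtF_le_one_lt:
  fixes a b :: nat and B :: "nat set"
  assumes F: "finite F" "\<Union>F = {..<n}" and B: "B \<in> F" "\<not> redundant F B"
    and a: "a \<notin> B" "a < n" and b: "b \<in> B"
  shows "card {x \<in> vecs n. x a + x b = (0 :: 'a::{finite,field}) \<and> wtF F x \<le> 1}
    < card {x \<in> vecs n. x a = (0 :: 'a) \<and> wtF F x \<le> 1}"
proof -
  define S1 :: "(nat \<Rightarrow> 'a) set" where "S1 = {x \<in> vecs n. x a = 0 \<and> wtF F x \<le> 1}"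
  define S2 :: "(nat \<Rightarrow> 'a) set" where "S2 = {x \<in> vecs n. x a + x b = 0 \<and> wtF F x \<le> 1}"
  have supp_F: "supp x \<subseteq> \<Union>F" if "x \<in> vecs n" for x :: "nat \<Rightarrow> 'a"
    using supp_subset_lessThan[OF that] F(2) by simp
  \<comment> \<open>Clearing coordinate \<open>a\<close> embeds \<open>S2\<close> into \<open>S1\<close>, missing the indicator of \<open>B\<close>.\<close>
  have inj: "inj_on (\<lambda>x. x(a := 0)) S2"
  proof (rule inj_onI)
    fix x y assume x: "x \<in> S2" and y: "y \<in> S2" and eq: "x(a := 0) = y(a := 0)"
    have "a \<noteq> b" using a(1) b by blast
    then have "x b = y b" using fun_cong[OF eq, of b] by simp
    then have "x a = y a" using x y by (auto simp: S2_def add_eq_0_iff)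
    with eq show "x = y" by (metis fun_upd_triv fun_upd_upd)
  qed
  moreover have "(\<lambda>x. x(a := 0)) ` S2 \<subseteq> S1"
  proof clarify
    fix x assume x: "x \<in> S2"
    have "wtF F (x(a := 0)) \<le> wtF F x"
      by (rule wtF_mono[OF F(1) supp_F]) (use x in \<open>auto simp: S2_def supp_def\<close>)
    then show "x(a := 0) \<in> S1" using x by (auto simp: S1_def S2_def vecs_def)
  qed
  moreover have "indicator B \<in> S1"
  proof -
    have "indicator B \<in> vecs n" using B(1) F(2) by (intro indicator_in_vecs) blast
    moreover have "wtF F (indicator B :: nat \<Rightarrow> 'a) \<le> 1"
      by (rule wtF_le_one[OF F(1) B(1)]) (simp add: supp_indicator)
    ultimately show ?thesis using a(1) by (simp add: S1_def)
  qed
  moreover have "indicator B \<notin> (\<lambda>x. x(a := 0)) ` S2"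
  proof
    assume "indicator B \<in> (\<lambda>x. x(a := 0)) ` S2"
    then obtain x where x: "x \<in> S2" and eq: "indicator B = x(a := 0)" by blast
    have "x i = 1" if "i \<in> B" for i using fun_cong[OF eq, of i] that a(1) by (auto split: if_splits)
    then have "insert a B \<subseteq> supp x" using x b by (auto simp: S2_def supp_def add_eq_0_iff)
    moreover obtain C where "C \<in> F" "supp x \<subseteq> C"
      using wtF_le_one_imp_in_block[OF F(1) supp_F] x \<open>insert a B \<subseteq> supp x\<close> by (auto simp: S2_def)
    ultimately show False using B a(1) unfolding redundant_def by blast
  qed
  moreover have "finite S1" unfolding S1_def by (rule finite_subset[OF _ finite_vecs]) auto
  ultimately have "card ((\<lambda>x. x(a := 0)) ` S2) < card S1"
    by (intro psubset_card_mono) blast+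
  then show ?thesis using card_image[OF inj] unfolding S1_def S2_def by simp
qed

lemma wt_distrib_coord_hyperplanes_ne:
  fixes a b :: nat and B :: "nat set"
  assumes "finite F" "\<Union>F = {..<n}" "B \<in> F" "\<not> redundant F B" "a \<notin> B" "a < n" "b \<in> B"
  shows "wt_distrib F {x \<in> vecs n. x a = (0 :: 'a::{finite,field})}
    \<noteq> wt_distrib F {x \<in> vecs n. x a + x b = (0 :: 'a)}"
proof
  let ?D1 = "{x \<in> vecs n. x a = (0 :: 'a)}" and ?D2 = "{x \<in> vecs n. x a + x b = (0 :: 'a)}"
  have fin: "finite ?D1" "finite ?D2" by (rule finite_subset[OF _ finite_vecs], blast)+
  assume "wt_distrib F ?D1 = wt_distrib F ?D2"
  then have "card {x \<in> ?D1. wtF F x \<le> 1} = card {x \<in> ?D2. wtF F x \<le> 1}"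
    by (rule card_wtF_le_eq_if_wt_distrib_eq[OF fin])
  moreover have "{x \<in> ?D1. wtF F x \<le> 1} = {x \<in> vecs n. x a = 0 \<and> wtF F x \<le> 1}"
    and "{x \<in> ?D2. wtF F x \<le> 1} = {x \<in> vecs n. x a + x b = 0 \<and> wtF F x \<le> 1}"
    by blast+
  ultimately show False using card_wtF_le_one_lt[OF assms, where 'a='a] by simp
qed

lemma overlapping_blocks_not_MacWilliams:
  assumes cov: "is_covering n F" and nr: "\<forall>A\<in>F. \<not> redundant F A"
    and A: "A \<in> F" and B: "B \<in> F" "A \<noteq> B" and AB: "A \<inter> B \<noteq> {}"
  shows "\<not> admits_MacWilliams TYPE('a::{finite,field}) n F"
proof
  assume MW: "admits_MacWilliams TYPE('a) n F"
  have F: "finite F" "\<Union>F = {..<n}" using cov by (auto simp: finite_covering is_covering_def)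
  obtain a where a: "a \<in> A" "a \<notin> B" using nr A B unfolding redundant_def by blast
  obtain b where b: "b \<in> A" "b \<in> B" using AB by blast
  have "{a, b} \<subseteq> {..<n}" using a(1) b(1) A F(2) by blast
  \<comment> \<open>Two lines inside the block \<open>A\<close> look alike, but their duals do not.\<close>
  define u1 :: "nat \<Rightarrow> 'a" where "u1 = indicator {a}"
  define u2 :: "nat \<Rightarrow> 'a" where "u2 = indicator {a, b}"
  have supp_u: "supp u1 = {a}" "supp u2 = {a, b}" unfolding u1_def u2_def by (rule supp_indicator)+
  have u: "u1 \<in> vecs n" "u2 \<in> vecs n" "u1 \<noteq> (\<lambda>_. 0)" "u2 \<noteq> (\<lambda>_. 0)"
    "supp u1 \<subseteq> A" "supp u2 \<subseteq> A"
    using \<open>{a, b} \<subseteq> {..<n}\<close> supp_u supp_eq_empty_iff a(1) b(1)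
    by (auto simp: u1_def u2_def intro!: indicator_in_vecs)
  have "wt_distrib F (line_code u1) = wt_distrib F (line_code u2)"
    using wt_distrib_line_code_in_block[OF F(1) A u(1,3,5)] wt_distrib_line_code_in_block[OF F(1) A u(2,4,6)]
    by (rule trans[OF _ sym])
  moreover have L: "linear_code n (line_code u1)" "linear_code n (line_code u2)"
    using linear_code_line_code u(1,2) by blast+
  ultimately have "weight_enum F (line_code u1) = weight_enum F (line_code u2)"
    by (simp only: weight_enum_eq_iff_wt_distrib_eq[OF finite_linear_code[OF L(1)] finite_linear_code[OF L(2)]])
  then have W: "weight_enum F (dual_code n (line_code u1)) = weight_enum F (dual_code n (line_code u2))"
    by (rule admits_MacWilliamsD[OF MW L])
  have "a \<noteq> b" using a(2) b(2) by blast
  have "dot n x u1 = x a" "dot n x u2 = x a + x b" for x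
    using \<open>{a, b} \<subseteq> {..<n}\<close> \<open>a \<noteq> b\<close> by (simp_all add: u1_def u2_def dot_indicator)
  then have duals: "dual_code n (line_code u1) = {x \<in> vecs n. x a = 0}"
    "dual_code n (line_code u2) = {x \<in> vecs n. x a + x b = 0}"
    by (simp_all add: dual_code_line_code)
  have "finite {x \<in> vecs n. x a = (0 :: 'a)}" "finite {x \<in> vecs n. x a + x b = (0 :: 'a)}"
    by (rule finite_subset[OF _ finite_vecs], blast)+
  then show False
    using W wt_distrib_coord_hyperplanes_ne[OF F B(1) nr[rule_format, OF B(1)] a(2) _ b(2), where 'a='a]
      \<open>{a, b} \<subseteq> {..<n}\<close> unfolding duals by (simp add: weight_enum_eq_iff_wt_distrib_eq)
qed

lemma MacWilliams_imp_partition_on: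
  assumes "n \<ge> 1" and cov: "is_covering n F" and nr: "\<forall>A\<in>F. \<not> redundant F A"
    and MW: "admits_MacWilliams TYPE('a::{finite,field}) n F"
  shows "partition_on {..<n} F"
proof (rule partition_onI)
  show "\<Union>F = {..<n}" using cov by (simp add: is_covering_def)
  show "disjnt A B" if "A \<in> F" "B \<in> F" "A \<noteq> B" for A B
    using overlapping_blocks_not_MacWilliams[OF cov nr that] MW by (auto simp: disjnt_def)
  have "0 \<in> \<Union>F" using \<open>\<Union>F = {..<n}\<close> \<open>n \<ge> 1\<close> by simp
  then obtain A where "A \<in> F" "0 \<in> A" by blast
  then show "{} \<notin> F" using nr unfolding redundant_def by blast
qed

lemma k_partition_imp_MacWilliams:
  assumes "k_partition n F k"
  shows "admits_MacWilliams TYPE('a::{finite,field}) n F"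
  unfolding admits_MacWilliams_def
proof (intro allI impI)
  fix C1 C2 :: "(nat \<Rightarrow> 'a) set"
  assume C: "linear_code n C1" "linear_code n C2" and W: "weight_enum F C1 = weight_enum F C2"
  have "wt_distrib F C1 = wt_distrib F C2"
    using W unfolding weight_enum_eq_iff_wt_distrib_eq[OF finite_linear_code[OF C(1)] finite_linear_code[OF C(2)]] .
  then have "wt_distrib F (dual_code n C1) = wt_distrib F (dual_code n C2)"
    using wt_distrib_dual_code_eq[OF _ _ C] assms unfolding k_partition_def by blast
  then show "weight_enum F (dual_code n C1) = weight_enum F (dual_code n C2)"
    unfolding weight_enum_eq_iff_wt_distrib_eq[OF finite_linear_code finite_linear_code, OF linear_code_dual_code linear_code_dual_code] .
qed

theorem theorem1:
  fixes n :: nat and F :: "nat set set"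
  assumes "n \<ge> 1"
    and "is_covering n F"
    and "\<forall>A\<in>F. \<not> redundant F A"
  shows "admits_MacWilliams TYPE('a::{finite,field}) n F \<longleftrightarrow> (\<exists>k. k_partition n F k)"
proof
  assume MW: "admits_MacWilliams TYPE('a) n F"
  then have "partition_on {..<n} F" by (rule MacWilliams_imp_partition_on[OF assms])
  then show "\<exists>k. k_partition n F k" using MW by (rule MacWilliams_imp_k_partition)
next
  assume "\<exists>k. k_partition n F k"
  then show "admits_MacWilliams TYPE('a) n F" using k_partition_imp_MacWilliams by blast
qed

end
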